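(* In the sequential two-level memory model with a fast memory of size $M$, any classical Cholesky decomposition algorithm for $n{\times}n$ matrices has bandwidth cost $\Omega(n^3/M^{1/2})$ and latency cost $\Omega(n^3/M^{3/2})$.
   Context: The Cholesky decomposition of a real symmetric positive definite matrix $A$ is $A = LL^T$ with $L$ lower triangular; its entries satisfy $L(i,i)=\sqrt{A(i,i)-\sum_{k=1}^{i-1}L(i,k)^2}$ and $L(i,j)=\frac{1}{L(j,j)}\big(A(i,j)-\sum_{k=1}^{j-1}L(i,k)L(j,k)\big)$ for $i>j$. A "classical" Cholesky algorithm performs exactly these arithmetic operations, possibly reordered using only associativity and commutativity of addition (no pivoting, no distributivity). Sequential two-level memory model: a fast memory holding $M$ words and an unbounded slow memory; the matrix initially resides in slow memory and is too large to fit in fast memory ($M<n^2$). Words contiguous in slow memory can be read or written together as one message, of at most $M$ words. Bandwidth cost is the total number of words transferred between fast and slow memory; latency cost is the total number of messages. *)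

theory Defs
  imports Complex_Main "HOL-Library.Multiset"
begin

text \<open>Indices are 0-based: the matrix is indexed by 0..n-1. Inp i j (with j \<le> i)
  is the formal input entry A(i,j) = A(j,i).\<close>

datatype expr = Inp nat nat | Add expr expr | Sub expr expr | Mul expr expr
  | Div expr expr | Sqrt expr

text \<open>sum_tree e P N: the expression e is a tree of additions/subtractions whose
  value is (sum of P) minus (sum of N), the leaves being the summands. This captures
  reordering of a sum using only associativity and commutativity of addition.\<close>

inductive sum_tree :: "expr \<Rightarrow> expr multiset \<Rightarrow> expr multiset \<Rightarrow> bool" where
  leaf: "sum_tree e {#e#} {#}"
| add: "sum_tree e1 P1 N1 \<Longrightarrow> sum_tree e2 P2 N2 \<Longrightarrow>
          sum_tree (Add e1 e2) (P1 + P2) (N1 + N2)"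
| sub: "sum_tree e1 P1 N1 \<Longrightarrow> sum_tree e2 P2 N2 \<Longrightarrow>
          sum_tree (Sub e1 e2) (P1 + N2) (N1 + P2)"

text \<open>chol_entry i j e: e is a classical way of computing L(i,j) (j \<le> i):
  L(i,i) = sqrt(A(i,i) - sum_{k<i} L(i,k)^2),
  L(i,j) = (A(i,j) - sum_{k<j} L(i,k) L(j,k)) / L(j,j),
  where the sum may be reassociated/reordered arbitrarily.\<close>

inductive chol_entry :: "nat \<Rightarrow> nat \<Rightarrow> expr \<Rightarrow> bool" where
  diag: "\<lbrakk> length ps = i;
           \<forall>k<i. \<exists>x y. ps ! k = Mul x y \<and> chol_entry i k x \<and> chol_entry i k y;
           sum_tree s {#Inp i i#} (mset ps) \<rbrakk>
         \<Longrightarrow> chol_entry i i (Sqrt s)"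
| offdiag: "\<lbrakk> j < i; length ps = j;
           \<forall>k<j. \<exists>x y. (ps ! k = Mul x y \<or> ps ! k = Mul y x)
                     \<and> chol_entry i k x \<and> chol_entry j k y;
           sum_tree s {#Inp i j#} (mset ps);
           chol_entry j j d \<rbrakk>
         \<Longrightarrow> chol_entry i j (Div s d)"

datatype aop = OAdd | OSub | OMul | ODiv | OSqrt

text \<open>Load a ds: one message reading the contiguous slow words a, a+1, ..., a+|ds|-1
  into fast slots ds. Store a ss: one message writing fast slots ss to the contiguous
  slow words a, ..., a+|ss|-1. Arith op d args: arithmetic in fast memory.\<close>

datatype instr = Load nat "nat list" | Store nat "nat list" | Arith aop nat "nat list"

type_synonym mem = "nat \<Rightarrow> expr option"
type_synonym state = "mem \<times> mem"  \<comment> \<open>(fast memory, slow memory)\<close>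

fun apply_op :: "aop \<Rightarrow> expr list \<Rightarrow> expr option" where
  "apply_op OAdd [a, b] = Some (Add a b)"
| "apply_op OSub [a, b] = Some (Sub a b)"
| "apply_op OMul [a, b] = Some (Mul a b)"
| "apply_op ODiv [a, b] = Some (Div a b)"
| "apply_op OSqrt [a] = Some (Sqrt a)"
| "apply_op _ _ = None"

fun wf_instr :: "nat \<Rightarrow> instr \<Rightarrow> bool" where
  "wf_instr M (Load a ds) = (ds \<noteq> [] \<and> length ds \<le> M \<and> distinct ds \<and> (\<forall>d\<in>set ds. d < M))"
| "wf_instr M (Store a ss) = (ss \<noteq> [] \<and> length ss \<le> M \<and> (\<forall>s\<in>set ss. s < M))"
| "wf_instr M (Arith op d args) = (d < M \<and> (\<forall>x\<in>set args. x < M))"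

fun exec :: "instr \<Rightarrow> state \<Rightarrow> state" where
  "exec (Load a ds) (F, S) =
     (fold (\<lambda>k F'. F'(ds ! k := S (a + k))) [0..<length ds] F, S)"
| "exec (Store a ss) (F, S) =
     (F, fold (\<lambda>k S'. S'(a + k := F (ss ! k))) [0..<length ss] S)"
| "exec (Arith op d args) (F, S) =
     (F(d := (if (\<forall>x\<in>set args. F x \<noteq> None)
              then apply_op op (map (the \<circ> F) args) else None)), S)"

definition run :: "instr list \<Rightarrow> state \<Rightarrow> state" where
  "run prog st = fold exec prog st"

fun msg_words :: "instr \<Rightarrow> nat" where
  "msg_words (Load a ds) = length ds"
| "msg_words (Store a ss) = length ss"
| "msg_words (Arith op d args) = 0"

fun is_msg :: "instr \<Rightarrow> bool" where
  "is_msg (Arith op d args) = False"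
| "is_msg _ = True"

definition bandwidth :: "instr list \<Rightarrow> nat" where
  "bandwidth prog = sum_list (map msg_words prog)"

definition latency :: "instr list \<Rightarrow> nat" where
  "latency prog = length (filter is_msg prog)"

text \<open>Initial state: fast memory empty; the symmetric n x n matrix A is stored in slow
  memory, entry (i,j) at address pos i j (an arbitrary injective layout).\<close>

definition init_state :: "nat \<Rightarrow> (nat \<Rightarrow> nat \<Rightarrow> nat) \<Rightarrow> state" where
  "init_state n pos =
     (\<lambda>_. None,
      \<lambda>q. if \<exists>i<n. \<exists>j<n. pos i j = q
           then (case SOME ij. fst ij < n \<and> snd ij < n \<and> pos (fst ij) (snd ij) = q of
                   (i, j) \<Rightarrow> Some (Inp (max i j) (min i j)))
           else None)"

definition valid_layout :: "nat \<Rightarrow> (nat \<Rightarrow> nat \<Rightarrow> nat) \<Rightarrow> bool" where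
  "valid_layout n pos = inj_on (\<lambda>(i, j). pos i j) ({..<n} \<times> {..<n})"

definition classical_cholesky :: "nat \<Rightarrow> nat \<Rightarrow> (nat \<Rightarrow> nat \<Rightarrow> nat) \<Rightarrow> instr list \<Rightarrow> bool" where
  "classical_cholesky n M pos prog \<longleftrightarrow>
     (\<forall>ins\<in>set prog. wf_instr M ins) \<and>
     (\<forall>i<n. \<forall>j\<le>i. \<exists>q e. snd (run prog (init_state n pos)) q = Some e \<and> chol_entry i j e)"

end

theory Submission
  imports Defs
begin

text \<open>Every entry \<open>L(i,j)\<close> must end up in slow memory, which initially holds only inputs,
  so at least \<open>n(n+1)/2\<close> words are stored. The \<open>n\<^sup>3/6\<close> updates \<open>L(i,k) L(j,k)\<close> of
  \<open>L(i,j)\<close> hang off the additive spine of its expression; charge each to the step at which it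
  is formed and cut the trace into segments transferring at most \<open>2M\<close> words. The operands of
  the products charged to a segment stem from at most \<open>3M\<close> values (fast memory at its start and
  loads), the partial sums they feed reach at most \<open>3M\<close> values (fast memory at its end and
  stores), and a triple \<open>(i,j,k)\<close> is pinned down by either, so a segment accounts for
  \<open>O(M \<surd>M)\<close> updates. With \<open>W/M + 1\<close> segments, \<open>n\<^sup>3 = O(W \<surd>M + M \<surd>M)\<close>, and with
  \<open>W \<ge> n\<^sup>2/2\<close> and \<open>M < n\<^sup>2\<close> this is \<open>W = \<Omega>(n\<^sup>3/\<surd>M)\<close>. A message carries at most
  \<open>M\<close> words, which gives the latency bound.\<close>

section \<open>Spines of classical Cholesky expressions\<close>

text \<open>The spine of an expression is reached through sums, numerators and square roots; for a
  classical \<open>L(i,j)\<close> it consists of the partial sums, its only input is \<open>A(i,j)\<close>, and the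
  products hanging off it are the updates \<open>L(i,k) L(j,k)\<close>.\<close>

fun spine_inputs :: "expr \<Rightarrow> (nat \<times> nat) set" where
  "spine_inputs (Inp i j) = {(i, j)}"
| "spine_inputs (Add a b) = spine_inputs a \<union> spine_inputs b"
| "spine_inputs (Sub a b) = spine_inputs a \<union> spine_inputs b"
| "spine_inputs (Mul a b) = {}"
| "spine_inputs (Div a b) = spine_inputs a"
| "spine_inputs (Sqrt a) = spine_inputs a"

fun spine_children :: "expr \<Rightarrow> expr set" where
  "spine_children (Inp i j) = {}"
| "spine_children (Add a b) = {a, b}"
| "spine_children (Sub a b) = {a, b}"
| "spine_children (Mul a b) = {}"
| "spine_children (Div a b) = {a}"
| "spine_children (Sqrt a) = {a}"

text \<open>A product of values with spine inputs \<open>(i, k)\<close> and \<open>(j, k)\<close> is the Schur-complement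
  update of the entry \<open>(max i j, min i j)\<close>.\<close>

fun update_entries :: "expr \<Rightarrow> (nat \<times> nat) set" where
  "update_entries (Inp i j) = {}"
| "update_entries (Add a b) = update_entries a \<union> update_entries b"
| "update_entries (Sub a b) = update_entries a \<union> update_entries b"
| "update_entries (Mul a b) =
     {(max (fst p) (fst q), min (fst p) (fst q)) | p q. p \<in> spine_inputs a \<and> q \<in> spine_inputs b}"
| "update_entries (Div a b) = update_entries a"
| "update_entries (Sqrt a) = update_entries a"

inductive spine_sub :: "expr \<Rightarrow> expr \<Rightarrow> bool" where
  refl: "spine_sub e e"
| step: "c \<in> spine_children e \<Longrightarrow> spine_sub z c \<Longrightarrow> spine_sub z e"

lemma spine_sub_trans:
  assumes "spine_sub a b" "spine_sub b c"
  shows "spine_sub a c"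
  using assms(2,1) by (induction rule: spine_sub.induct) (auto intro: spine_sub.step)

lemma spine_sub_child: "c \<in> spine_children e \<Longrightarrow> spine_sub e X \<Longrightarrow> spine_sub c X"
  by (meson spine_sub.refl spine_sub.step spine_sub_trans)

lemma spine_sub_proper: "spine_sub z e \<Longrightarrow> z \<noteq> e \<Longrightarrow> \<exists>c\<in>spine_children e. spine_sub z c"
  by (induction rule: spine_sub.induct) auto

lemma spine_sub_Inp: "spine_sub z (Inp i j) \<Longrightarrow> z = Inp i j"
  by (induction z "Inp i j" rule: spine_sub.induct) auto

lemma spine_sub_spine_inputs: "spine_sub z e \<Longrightarrow> spine_inputs z \<subseteq> spine_inputs e"
proof (induction rule: spine_sub.induct)
  case (step c e z)
  then show ?case by (cases e) auto
qed simp

lemma spine_sub_update_entries: "spine_sub z e \<Longrightarrow> update_entries z \<subseteq> update_entries e"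
proof (induction rule: spine_sub.induct)
  case (step c e z)
  then show ?case by (cases e) auto
qed simp

lemma spine_inputs_eq_children:
  "(\<And>i j. e \<noteq> Inp i j) \<Longrightarrow> spine_inputs e = \<Union> (spine_inputs ` spine_children e)"
  by (cases e) auto

lemma apply_op_spine_children:
  "apply_op op vs = Some e \<Longrightarrow> spine_children e \<subseteq> set vs \<and> (\<forall>i j. e \<noteq> Inp i j)"
  by (induction op vs rule: apply_op.induct) auto

lemma apply_op_Mul: "apply_op op vs = Some (Mul a b) \<Longrightarrow> vs = [a, b]"
  by (induction op vs rule: apply_op.induct) auto

lemma sum_tree_spine:
  "sum_tree s P N \<Longrightarrow> spine_inputs s = \<Union> (spine_inputs ` set_mset (P + N)) \<and>
     update_entries s = \<Union> (update_entries ` set_mset (P + N)) \<and> (\<forall>e\<in>#P + N. spine_sub e s)"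
  by (induction rule: sum_tree.induct) (auto intro: spine_sub.refl spine_sub.step)

lemma chol_entry_spine_inputs: "chol_entry i j e \<Longrightarrow> spine_inputs e = {(i, j)}"
proof (induction rule: chol_entry.induct)
  case (diag ps i s)
  then have "\<forall>e\<in>set ps. spine_inputs e = {}"
    by (metis in_set_conv_nth spine_inputs.simps(4))
  then show ?case using sum_tree_spine[OF diag.hyps(2)] by auto
next
  case (offdiag j i ps s d)
  then have "\<forall>e\<in>set ps. spine_inputs e = {}"
    by (metis in_set_conv_nth spine_inputs.simps(4))
  then show ?case using sum_tree_spine[OF offdiag.hyps(3)] by auto
qed

lemma chol_entry_update_entries: "chol_entry i j e \<Longrightarrow> update_entries e \<subseteq> {(i, j)}"
proof (induction rule: chol_entry.induct)
  case (diag ps i s)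
  have "update_entries p \<subseteq> {(i, i)}" if "p \<in> set ps" for p
  proof -
    obtain k where "k < i" "ps ! k = p" using diag.hyps(1) \<open>p \<in> set ps\<close> by (metis in_set_conv_nth)
    then obtain x y where "p = Mul x y" "chol_entry i k x" "chol_entry i k y"
      using diag.IH by blast
    then show ?thesis using chol_entry_spine_inputs by auto
  qed
  then show ?case using sum_tree_spine[OF diag.hyps(2)] by auto
next
  case (offdiag j i ps s d)
  have "update_entries p \<subseteq> {(i, j)}" if "p \<in> set ps" for p
  proof -
    obtain k where "k < j" "ps ! k = p" using offdiag.hyps(2) \<open>p \<in> set ps\<close> by (metis in_set_conv_nth)
    then obtain x y where "p = Mul x y \<or> p = Mul y x" "chol_entry i k x" "chol_entry j k y"
      using offdiag.IH by blast
    then show ?thesis using chol_entry_spine_inputs offdiag.hyps(1) by auto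
  qed
  then show ?case using sum_tree_spine[OF offdiag.hyps(3)] by auto
qed

lemma chol_entry_not_Inp: "chol_entry i j e \<Longrightarrow> e \<noteq> Inp a b"
  by (cases rule: chol_entry.cases) auto

lemma chol_entry_spine_product:
  assumes "chol_entry i j X" "k < j"
  obtains a b where "spine_sub (Mul a b) X" "update_entries (Mul a b) = {(i, j)}"
    "spine_inputs a = {(i, k)} \<and> spine_inputs b = {(j, k)} \<or>
     spine_inputs a = {(j, k)} \<and> spine_inputs b = {(i, k)}"
  using assms
proof (cases rule: chol_entry.cases)
  case (diag ps s)
  then obtain x y where xy: "ps ! k = Mul x y" "chol_entry i k x" "chol_entry i k y"
    using assms(2) by blast
  have "Mul x y \<in># mset ps" using xy(1) diag assms(2) by (metis nth_mem set_mset_mset)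
  then have "spine_sub (Mul x y) X" using sum_tree_spine[OF diag(5)] diag by (auto intro: spine_sub.step)
  moreover have "spine_inputs x = {(i, k)}" "spine_inputs y = {(i, k)}"
    using xy chol_entry_spine_inputs by auto
  moreover from this have "update_entries (Mul x y) = {(i, j)}" using diag by simp
  ultimately show ?thesis using that diag by auto
next
  case (offdiag ps s d)
  then obtain x y where xy: "ps ! k = Mul x y \<or> ps ! k = Mul y x" "chol_entry i k x" "chol_entry j k y"
    using assms(2) by blast
  have "ps ! k \<in># mset ps" using offdiag assms(2) by simp
  then have sub: "spine_sub (ps ! k) X"
    using sum_tree_spine[OF offdiag(5)] offdiag by (auto intro: spine_sub.step)
  have "spine_inputs x = {(i, k)}" "spine_inputs y = {(j, k)}" using xy chol_entry_spine_inputs by auto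
  moreover from this offdiag have "update_entries (Mul x y) = {(i, j)}" "update_entries (Mul y x) = {(i, j)}"
    by auto
  ultimately show ?thesis using xy(1) sub that by metis
qed

section \<open>Execution traces\<close>

lemma fold_fun_upd_in_range:
  "fold (\<lambda>k F. F(g k := h k)) xs F q \<in> insert (F q) (h ` set xs)"
proof (induction xs arbitrary: F)
  case (Cons x xs)
  define v where "v = fold (\<lambda>k F. F(g k := h k)) (x # xs) F q"
  have "v \<in> insert ((F(g x := h x)) q) (h ` set xs)"
    unfolding v_def fold_Cons comp_apply by (rule Cons.IH)
  moreover have "(F(g x := h x)) q \<in> {F q, h x}" by simp
  ultimately have "v \<in> insert (F q) (h ` set (x # xs))" by auto
  then show ?case unfolding v_def .
qed simp

lemma fold_fun_upd_other:
  "q \<notin> g ` set xs \<Longrightarrow> fold (\<lambda>k F. F(g k := h k)) xs F q = F q"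
proof (induction xs arbitrary: F)
  case (Cons x xs)
  have "fold (\<lambda>k F. F(g k := h k)) (x # xs) F q = fold (\<lambda>k F. F(g k := h k)) xs (F(g x := h x)) q"
    by simp
  also have "\<dots> = (F(g x := h x)) q" using Cons.prems by (intro Cons.IH) simp
  also have "\<dots> = F q" using Cons.prems by simp
  finally show ?case .
qed simp

lemma apply_op_spine_inputs:
  assumes "apply_op op vs = Some e" "p \<in> spine_inputs e"
  obtains c where "c \<in> set vs" "c \<in> spine_children e" "p \<in> spine_inputs c"
  using apply_op_spine_children[OF assms(1)] spine_inputs_eq_children assms(2) that by blast

lemma bandwidth_le_latency:
  "\<forall>ins\<in>set prog. wf_instr M ins \<Longrightarrow> bandwidth prog \<le> M * latency prog"
proof (induction prog)
  case (Cons ins prog)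
  then show ?case by (cases ins) (auto simp: bandwidth_def latency_def)
qed (simp add: bandwidth_def latency_def)

locale trace =
  fixes n M :: nat and pos :: "nat \<Rightarrow> nat \<Rightarrow> nat" and prog :: "instr list"
  assumes wf: "\<forall>ins\<in>set prog. wf_instr M ins"
begin

abbreviation "L \<equiv> length prog"

definition state_at :: "nat \<Rightarrow> state" where
  "state_at t = run (take t prog) (init_state n pos)"

definition fast_values :: "nat \<Rightarrow> expr set" where
  "fast_values t = {v. \<exists>q. fst (state_at t) q = Some v}"

definition slow_values :: "nat \<Rightarrow> expr set" where
  "slow_values t = {v. \<exists>q. snd (state_at t) q = Some v}"

definition loaded_values :: "nat \<Rightarrow> expr set" where
  "loaded_values t = (case prog ! t of
     Load a ds \<Rightarrow> {v. \<exists>k<length ds. snd (state_at t) (a + k) = Some v} | _ \<Rightarrow> {})"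

definition stored_values :: "nat \<Rightarrow> expr set" where
  "stored_values t = (case prog ! t of
     Store a ss \<Rightarrow> {v. \<exists>k<length ss. fst (state_at t) (ss ! k) = Some v} | _ \<Rightarrow> {})"

definition stored_addresses :: "nat \<Rightarrow> nat set" where
  "stored_addresses t = (case prog ! t of Store a ss \<Rightarrow> (\<lambda>k. a + k) ` {..<length ss} | _ \<Rightarrow> {})"

lemma state_at_0: "state_at 0 = init_state n pos"
  by (simp add: state_at_def run_def)

lemma state_at_Suc: "t < L \<Longrightarrow> state_at (Suc t) = exec (prog ! t) (state_at t)"
  by (simp add: state_at_def run_def take_Suc_conv_app_nth)

lemma state_at_length: "state_at L = run prog (init_state n pos)"
  by (simp add: state_at_def)

lemma fast_values_0: "fast_values 0 = {}"
  by (auto simp: fast_values_def state_at_0 init_state_def)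

lemma slow_values_0: "v \<in> slow_values 0 \<Longrightarrow> \<exists>i j. v = Inp i j"
  by (auto simp: slow_values_def state_at_0 init_state_def split: if_splits prod.splits)

lemma loaded_values_subset: "loaded_values t \<subseteq> slow_values t"
  by (auto simp: loaded_values_def slow_values_def split: instr.splits)

lemma stored_values_subset: "stored_values t \<subseteq> fast_values t"
  by (auto simp: stored_values_def fast_values_def split: instr.splits)

lemma fast_values_Suc:
  assumes "t < L" "v \<in> fast_values (Suc t)"
  shows "v \<in> fast_values t \<or> v \<in> loaded_values t \<or>
    (\<exists>op vs. apply_op op vs = Some v \<and> set vs \<subseteq> fast_values t)"
proof -
  obtain F S where FS: "state_at t = (F, S)" by fastforce
  obtain q where q: "fst (state_at (Suc t)) q = Some v"
    using assms(2) by (auto simp: fast_values_def)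
  show ?thesis
  proof (cases "prog ! t")
    case (Load a ds)
    then have "Some v \<in> insert (F q) ((\<lambda>k. S (a + k)) ` set [0..<length ds])"
      using q state_at_Suc[OF assms(1)] FS
        fold_fun_upd_in_range[of "\<lambda>k. ds ! k" "\<lambda>k. S (a + k)" "[0..<length ds]" F q] by simp
    then show ?thesis using FS Load by (auto simp: fast_values_def loaded_values_def)
  next
    case (Arith op d args)
    show ?thesis
    proof (cases "q = d")
      case True
      then have "\<forall>x\<in>set args. F x \<noteq> None" "apply_op op (map (the \<circ> F) args) = Some v"
        using q state_at_Suc[OF assms(1)] FS Arith by (auto split: if_splits)
      moreover from this(1) have "set (map (the \<circ> F) args) \<subseteq> fast_values t"
        using FS by (auto simp: fast_values_def)
      ultimately show ?thesis by blast
    next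
      case False
      then show ?thesis using q state_at_Suc[OF assms(1)] FS Arith by (auto simp: fast_values_def)
    qed
  qed (use state_at_Suc[OF assms(1)] FS q in \<open>auto simp: fast_values_def\<close>)
qed

lemma slow_values_Suc:
  assumes "t < L" "v \<in> slow_values (Suc t)"
  shows "v \<in> slow_values t \<or> v \<in> stored_values t"
proof -
  obtain F S where FS: "state_at t = (F, S)" by fastforce
  obtain q where q: "snd (state_at (Suc t)) q = Some v"
    using assms(2) by (auto simp: slow_values_def)
  show ?thesis
  proof (cases "prog ! t")
    case (Store a ss)
    then have "Some v \<in> insert (S q) ((\<lambda>k. F (ss ! k)) ` set [0..<length ss])"
      using q state_at_Suc[OF assms(1)] FS
        fold_fun_upd_in_range[of "\<lambda>k. a + k" "\<lambda>k. F (ss ! k)" "[0..<length ss]" S q] by simp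
    then show ?thesis using FS Store by (auto simp: slow_values_def stored_values_def)
  qed (use state_at_Suc[OF assms(1)] FS q in \<open>auto simp: slow_values_def\<close>)
qed

lemma fast_memory_bounded: "t \<le> L \<Longrightarrow> M \<le> q \<Longrightarrow> fst (state_at t) q = None"
proof (induction t)
  case 0
  then show ?case by (simp add: state_at_0 init_state_def)
next
  case (Suc t)
  then have t: "t < L" by simp
  have wf_t: "wf_instr M (prog ! t)" using wf t by simp
  obtain F S where FS: "state_at t = (F, S)" by fastforce
  have F: "F q = None" using Suc FS by simp
  show ?case
  proof (cases "prog ! t")
    case (Load a ds)
    then have "\<forall>k<length ds. ds ! k < M" using wf_t by (simp add: nth_mem)
    then have notin: "q \<notin> (\<lambda>k. ds ! k) ` set [0..<length ds]" using Suc.prems(2) by fastforce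
    have "fst (state_at (Suc t)) q = fold (\<lambda>k F. F(ds ! k := S (a + k))) [0..<length ds] F q"
      using state_at_Suc[OF t] FS Load by simp
    also have "\<dots> = F q" by (rule fold_fun_upd_other[OF notin])
    finally show ?thesis using F by simp
  next
    case (Arith op d args)
    then have "d \<noteq> q" using wf_t Suc.prems(2) by auto
    then show ?thesis using state_at_Suc[OF t] FS F Arith by simp
  qed (use state_at_Suc[OF t] FS F in simp)
qed

lemma card_fast_values: "t \<le> L \<Longrightarrow> finite (fast_values t) \<and> card (fast_values t) \<le> M"
proof -
  assume t: "t \<le> L"
  let ?V = "(\<lambda>q. the (fst (state_at t) q)) ` {..<M}"
  have sub: "fast_values t \<subseteq> ?V"
  proof
    fix v assume "v \<in> fast_values t"
    then obtain q where q: "fst (state_at t) q = Some v" by (auto simp: fast_values_def)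
    then have "q < M" using fast_memory_bounded[OF t] by (metis not_le option.distinct(1))
    then show "v \<in> ?V" using q by force
  qed
  have "card (fast_values t) \<le> card ?V" by (rule card_mono[OF _ sub]) simp
  also have "\<dots> \<le> M" using card_image_le[of "{..<M}"] by simp
  finally show ?thesis using finite_subset[OF sub] by simp
qed

lemma card_loaded_values: "finite (loaded_values t) \<and> card (loaded_values t) \<le> msg_words (prog ! t)"
proof (cases "prog ! t")
  case (Load a ds)
  let ?V = "(\<lambda>k. the (snd (state_at t) (a + k))) ` {..<length ds}"
  have sub: "loaded_values t \<subseteq> ?V" using Load by (force simp: loaded_values_def)
  have "card (loaded_values t) \<le> card ?V" by (rule card_mono[OF _ sub]) simp
  also have "\<dots> \<le> length ds" using card_image_le[of "{..<length ds}"] by simp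
  finally show ?thesis using finite_subset[OF sub] Load by simp
qed (auto simp: loaded_values_def)

lemma card_stored_values: "finite (stored_values t) \<and> card (stored_values t) \<le> msg_words (prog ! t)"
proof (cases "prog ! t")
  case (Store a ss)
  let ?V = "(\<lambda>k. the (fst (state_at t) (ss ! k))) ` {..<length ss}"
  have sub: "stored_values t \<subseteq> ?V" using Store by (force simp: stored_values_def)
  have "card (stored_values t) \<le> card ?V" by (rule card_mono[OF _ sub]) simp
  also have "\<dots> \<le> length ss" using card_image_le[of "{..<length ss}"] by simp
  finally show ?thesis using finite_subset[OF sub] Store by simp
qed (auto simp: stored_values_def)

lemma card_stored_addresses:
  "finite (stored_addresses t) \<and> card (stored_addresses t) \<le> msg_words (prog ! t)"
proof (cases "prog ! t")
  case (Store a ss)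
  then show ?thesis using card_image_le[of "{..<length ss}" "\<lambda>k. a + k"]
    by (simp add: stored_addresses_def)
qed (auto simp: stored_addresses_def)

lemma slow_memory_changed:
  "e \<le> L \<Longrightarrow> snd (state_at e) q \<noteq> snd (state_at 0) q \<Longrightarrow> q \<in> (\<Union>t<e. stored_addresses t)"
proof (induction e)
  case (Suc e)
  then have e: "e < L" by simp
  show ?case
  proof (cases "snd (state_at (Suc e)) q = snd (state_at e) q")
    case True
    then show ?thesis using Suc by (auto simp: lessThan_Suc)
  next
    case False
    obtain F S where FS: "state_at e = (F, S)" by fastforce
    show ?thesis
    proof (cases "prog ! e")
      case (Store a ss)
      have eq: "snd (state_at (Suc e)) q = fold (\<lambda>k S. S(a + k := F (ss ! k))) [0..<length ss] S q"
        using state_at_Suc[OF e] FS Store by simp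
      have "q \<in> (\<lambda>k. a + k) ` set [0..<length ss]"
      proof (rule ccontr)
        assume "q \<notin> (\<lambda>k. a + k) ` set [0..<length ss]"
        then have "snd (state_at (Suc e)) q = S q" unfolding eq by (rule fold_fun_upd_other)
        then show False using False FS by simp
      qed
      then have "q \<in> stored_addresses e" using Store by (force simp: stored_addresses_def)
      then show ?thesis by auto
    qed (use False state_at_Suc[OF e] FS in simp_all)
  qed
qed simp

lemma slow_value_written:
  "s \<le> e \<Longrightarrow> e \<le> L \<Longrightarrow> z \<in> slow_values e \<Longrightarrow> z \<notin> slow_values s \<Longrightarrow> z \<in> (\<Union>t\<in>{s..<e}. stored_values t)"
proof (induction e)
  case (Suc e)
  show ?case
  proof (cases "s = Suc e")
    case False
    then have "s \<le> e" "e < L" using Suc.prems by auto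
    then show ?thesis using slow_values_Suc[OF \<open>e < L\<close> Suc.prems(3)] Suc.IH Suc.prems by force
  qed (use Suc.prems in simp)
qed simp

definition segment_inputs :: "nat \<Rightarrow> nat \<Rightarrow> expr set" where
  "segment_inputs b e = fast_values b \<union> (\<Union>t\<in>{b..<e}. loaded_values t)"

definition segment_outputs :: "nat \<Rightarrow> nat \<Rightarrow> expr set" where
  "segment_outputs b e = fast_values e \<union> (\<Union>t\<in>{b..<e}. stored_values t)"

lemma segment_inputs_mono: "e \<le> e' \<Longrightarrow> segment_inputs b e \<subseteq> segment_inputs b e'"
  by (auto simp: segment_inputs_def)

lemma spine_input_origin:
  assumes "b \<le> t" "t \<le> L" "v \<in> fast_values t" "p \<in> spine_inputs v"
  shows "\<exists>z. spine_sub z v \<and> p \<in> spine_inputs z \<and> z \<in> segment_inputs b t"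
  using assms
proof (induction t arbitrary: v rule: dec_induct)
  case base
  then show ?case by (auto simp: segment_inputs_def intro: spine_sub.refl)
next
  case (step t)
  then have t: "t < L" by simp
  have mono: "segment_inputs b t \<subseteq> segment_inputs b (Suc t)" by (rule segment_inputs_mono) simp
  from fast_values_Suc[OF t step.prems(2)] show ?case
  proof (elim disjE exE conjE)
    assume "v \<in> fast_values t"
    then show ?thesis using step.IH t step.prems(3) mono by fastforce
  next
    assume "v \<in> loaded_values t"
    then have "v \<in> segment_inputs b (Suc t)" using step.hyps by (auto simp: segment_inputs_def)
    then show ?thesis using step.prems by (blast intro: spine_sub.refl)
  next
    fix op vs assume op: "apply_op op vs = Some v" and vs: "set vs \<subseteq> fast_values t"
    obtain c where c: "c \<in> set vs" "c \<in> spine_children v" "p \<in> spine_inputs c"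
      using apply_op_spine_inputs[OF op step.prems(3)] .
    then obtain z where "spine_sub z c" "p \<in> spine_inputs z" "z \<in> segment_inputs b t"
      using step.IH[OF less_imp_le[OF t]] vs by blast
    then show ?thesis using c mono by (blast intro: spine_sub.step)
  qed
qed

definition partial_in_memory :: "expr \<Rightarrow> expr \<Rightarrow> nat \<Rightarrow> bool" where
  "partial_in_memory m X t \<longleftrightarrow>
     (\<exists>z. spine_sub m z \<and> spine_sub z X \<and> z \<in> fast_values t \<union> slow_values t)"

lemma not_partial_in_memory_0: "\<not> partial_in_memory (Mul a b) X 0"
  using fast_values_0 slow_values_0 spine_sub_Inp by (fastforce simp: partial_in_memory_def)

lemma operands_before_product:
  assumes "t < L" "\<not> partial_in_memory (Mul a b) X t" "partial_in_memory (Mul a b) X (Suc t)"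
  shows "a \<in> fast_values t \<and> b \<in> fast_values t"
proof -
  obtain z where z: "spine_sub (Mul a b) z" "spine_sub z X" "z \<in> fast_values (Suc t) \<union> slow_values (Suc t)"
    using assms(3) by (auto simp: partial_in_memory_def)
  have new: "z \<notin> fast_values t \<union> slow_values t" using assms(2) z(1,2) by (auto simp: partial_in_memory_def)
  then have "z \<notin> slow_values (Suc t)"
    using slow_values_Suc[OF assms(1)] stored_values_subset by blast
  then obtain op vs where op: "apply_op op vs = Some z" "set vs \<subseteq> fast_values t"
    using z(3) fast_values_Suc[OF assms(1)] loaded_values_subset new by blast
  show ?thesis
  proof (cases "z = Mul a b")
    case True
    then show ?thesis using op apply_op_Mul by fastforce
  next
    case False
    then obtain c where "c \<in> spine_children z" "spine_sub (Mul a b) c"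
      using spine_sub_proper z(1) by blast
    moreover from this have "c \<in> fast_values t" "spine_sub c X"
      using apply_op_spine_children[OF op(1)] op(2) spine_sub_child z(2) by blast+
    ultimately show ?thesis using assms(2) by (auto simp: partial_in_memory_def)
  qed
qed

lemma partial_in_segment_outputs:
  assumes "s \<le> e" "e \<le> L" "\<not> partial_in_memory m X s" "partial_in_memory m X e"
  shows "\<exists>z. spine_sub m z \<and> spine_sub z X \<and> z \<in> segment_outputs s e"
proof -
  obtain z where z: "spine_sub m z" "spine_sub z X" "z \<in> fast_values e \<union> slow_values e"
    using assms(4) by (auto simp: partial_in_memory_def)
  have "z \<notin> slow_values s" using assms(3) z(1,2) by (auto simp: partial_in_memory_def)
  then have "z \<in> fast_values e \<or> z \<in> (\<Union>t\<in>{s..<e}. stored_values t)"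
    using z(3) slow_value_written[OF assms(1,2)] by blast
  then show ?thesis using z(1,2) by (auto simp: segment_outputs_def)
qed

text \<open>The step \<open>s\<close> is the last one before some partial sum between the product and \<open>X\<close>
  is held in memory, so that the product is formed from fast memory at step \<open>s\<close>.\<close>

lemma product_history:
  assumes "X \<in> slow_values L" "spine_sub (Mul a b) X"
  obtains s where "s < L" "a \<in> fast_values s" "b \<in> fast_values s"
    "\<And>e. s < e \<Longrightarrow> e \<le> L \<Longrightarrow> \<exists>z. spine_sub (Mul a b) z \<and> spine_sub z X \<and> z \<in> segment_outputs s e"
proof -
  let ?P = "partial_in_memory (Mul a b) X"
  define s where "s = (GREATEST t. t \<le> L \<and> \<not> ?P t)"
  have s: "s \<le> L" "\<not> ?P s"
    using GreatestI_nat[of "\<lambda>t. t \<le> L \<and> \<not> ?P t" 0 L] not_partial_in_memory_0 by (auto simp: s_def)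
  have later: "?P e" if "s < e" "e \<le> L" for e
    using Greatest_le_nat[of "\<lambda>t. t \<le> L \<and> \<not> ?P t" e L] that by (force simp: s_def)
  have "?P L" using assms by (auto simp: partial_in_memory_def intro: spine_sub.refl)
  then have "s < L" using s by (cases "s = L") auto
  then show ?thesis
    using that operands_before_product[OF \<open>s < L\<close> s(2) later] partial_in_segment_outputs s(2) later
    by (simp add: less_imp_le)
qed

definition operand_entries :: "nat \<Rightarrow> nat \<Rightarrow> (nat \<times> nat) set" where
  "operand_entries b e = {p. \<exists>z\<in>segment_inputs b e. spine_inputs z = {p}}"

definition result_entries :: "nat \<Rightarrow> nat \<Rightarrow> (nat \<times> nat) set" where
  "result_entries b e = {p. \<exists>z\<in>segment_outputs b e. update_entries z = {p}}"

lemma operand_entriesI: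
  assumes "b \<le> s" "s < e" "e \<le> L" "a \<in> fast_values s" "spine_inputs a = {p}"
  shows "p \<in> operand_entries b e"
proof -
  obtain z where "spine_sub z a" "p \<in> spine_inputs z" "z \<in> segment_inputs b s"
    using spine_input_origin[OF assms(1) _ assms(4)] assms(2,3,5) by auto
  moreover from this have "spine_inputs z = {p}" using spine_sub_spine_inputs assms(5) by blast
  ultimately show ?thesis
    using segment_inputs_mono[of s e b] assms(2) by (auto simp: operand_entries_def)
qed

lemma chol_triple_step:
  assumes "X \<in> slow_values L" "chol_entry i j X" "k < j"
  obtains s where "s < L" "\<And>b e. b \<le> s \<Longrightarrow> s < e \<Longrightarrow> e \<le> L \<Longrightarrow>
    (i, k) \<in> operand_entries b e \<and> (j, k) \<in> operand_entries b e \<and> (i, j) \<in> result_entries b e"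
proof -
  obtain a c where ac: "spine_sub (Mul a c) X" "update_entries (Mul a c) = {(i, j)}"
    "spine_inputs a = {(i, k)} \<and> spine_inputs c = {(j, k)} \<or>
     spine_inputs a = {(j, k)} \<and> spine_inputs c = {(i, k)}"
    using chol_entry_spine_product[OF assms(2,3)] .
  obtain s where s: "s < L" "a \<in> fast_values s" "c \<in> fast_values s"
    "\<And>e. s < e \<Longrightarrow> e \<le> L \<Longrightarrow> \<exists>z. spine_sub (Mul a c) z \<and> spine_sub z X \<and> z \<in> segment_outputs s e"
    using product_history[OF assms(1) ac(1)] by blast
  have "(i, j) \<in> result_entries b e" if be: "b \<le> s" "s < e" "e \<le> L" for b e
  proof -
    obtain z where z: "spine_sub (Mul a c) z" "spine_sub z X" "z \<in> segment_outputs s e"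
      using s(4) be(2,3) by blast
    have "update_entries z = {(i, j)}"
      using spine_sub_update_entries[OF z(1)] spine_sub_update_entries[OF z(2)]
        chol_entry_update_entries[OF assms(2)] ac(2) by blast
    moreover have "z \<in> segment_outputs b e" using z(3) be(1) by (auto simp: segment_outputs_def)
    ultimately show ?thesis by (auto simp: result_entries_def)
  qed
  moreover have "(i, k) \<in> operand_entries b e \<and> (j, k) \<in> operand_entries b e"
    if "b \<le> s" "s < e" "e \<le> L" for b e
    using ac(3) operand_entriesI[OF that s(2)] operand_entriesI[OF that s(3)] by blast
  ultimately show ?thesis using that s(1) by blast
qed

end

lemma le_mult_sqrt_of_le_min:
  fixes x d c :: nat
  assumes "x \<le> d * d" "x \<le> c"
  shows "real x \<le> real d * sqrt (real c)"
proof (cases "d * d \<le> c")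
  case True
  have "real d = sqrt (real d * real d)" by simp
  also have "\<dots> \<le> sqrt (real c)" using True by (simp flip: of_nat_mult)
  finally have "real d * real d \<le> real d * sqrt (real c)" by (simp add: mult_left_mono)
  then show ?thesis using assms(1) by (metis of_nat_le_iff of_nat_mult order_trans)
next
  case False
  then have "sqrt (real c) < sqrt (real d * real d)" by (simp flip: of_nat_mult)
  then have "sqrt (real c) * sqrt (real c) \<le> real d * sqrt (real c)" by (intro mult_right_mono) auto
  then show ?thesis using assms(2) by simp
qed

text \<open>For fixed \<open>k\<close>, a triple is determined both by its two entries in column \<open>k\<close> of \<open>A\<close>
  and by its entry in \<open>C\<close>, so the fibre has at most \<open>min (a\<^sub>k\<^sup>2) |C| \<le> a\<^sub>k \<surd>|C|\<close> elements.\<close>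

lemma card_triangles_le:
  fixes A :: "('a \<times> 'b) set" and C :: "('a \<times> 'a) set" and T :: "('a \<times> 'a \<times> 'b) set"
  assumes "finite A" "finite C" and T: "T \<subseteq> {(i, j, k). (i, k) \<in> A \<and> (j, k) \<in> A \<and> (i, j) \<in> C}"
  shows "real (card T) \<le> real (card A) * sqrt (real (card C))"
proof -
  define column where "column k = {p \<in> A. snd p = k}" for k
  define fibre where "fibre k = {t \<in> T. snd (snd t) = k}" for k
  have finite_column: "finite (column k)" for k using assms(1) by (simp add: column_def)
  have T_eq: "T = (\<Union>k\<in>snd ` A. fibre k)"
  proof
    show "T \<subseteq> (\<Union>k\<in>snd ` A. fibre k)"
    proof
      fix t assume "t \<in> T"
      moreover obtain i j k where t: "t = (i, j, k)" by (cases t)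
      ultimately have "(i, k) \<in> A" using T by blast
      then have "k \<in> snd ` A" by (rule image_eqI[rotated]) simp
      then show "t \<in> (\<Union>k\<in>snd ` A. fibre k)" using \<open>t \<in> T\<close> t by (auto simp: fibre_def)
    qed
  qed (auto simp: fibre_def)
  have "card (fibre k) \<le> card (column k) * card (column k)" for k
  proof -
    have "inj_on (\<lambda>(i, j, k). ((i, k), (j, k))) (fibre k)" by (auto simp: inj_on_def)
    moreover have "(\<lambda>(i, j, k). ((i, k), (j, k))) ` fibre k \<subseteq> column k \<times> column k"
    proof
      fix x assume "x \<in> (\<lambda>(i, j, k). ((i, k), (j, k))) ` fibre k"
      then obtain i j where "(i, j, k) \<in> T" "x = ((i, k), (j, k))" by (auto simp: fibre_def)
      then show "x \<in> column k \<times> column k" using T by (auto simp: column_def)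
    qed
    ultimately have "card (fibre k) \<le> card (column k \<times> column k)"
      by (rule card_inj_on_le) (simp add: finite_column)
    then show ?thesis by (simp add: card_cartesian_product)
  qed
  moreover have "card (fibre k) \<le> card C" for k
  proof -
    have "inj_on (\<lambda>(i, j, k). (i, j)) (fibre k)" by (auto simp: inj_on_def fibre_def)
    moreover have "(\<lambda>(i, j, k). (i, j)) ` fibre k \<subseteq> C" using T by (auto simp: fibre_def)
    ultimately show ?thesis using assms(2) by (rule card_inj_on_le)
  qed
  ultimately have fibre_le: "real (card (fibre k)) \<le> real (card (column k)) * sqrt (real (card C))" for k
    by (rule le_mult_sqrt_of_le_min)
  have "card T \<le> (\<Sum>k\<in>snd ` A. card (fibre k))"
    unfolding T_eq using assms(1) by (intro card_UN_le) simp
  then have "real (card T) \<le> (\<Sum>k\<in>snd ` A. real (card (fibre k)))"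
    by (metis of_nat_le_iff of_nat_sum)
  also have "\<dots> \<le> (\<Sum>k\<in>snd ` A. real (card (column k)) * sqrt (real (card C)))"
    by (rule sum_mono) (rule fibre_le)
  also have "\<dots> = real (\<Sum>k\<in>snd ` A. card (column k)) * sqrt (real (card C))"
    by (simp add: sum_distrib_right)
  also have "(\<Sum>k\<in>snd ` A. card (column k)) = card A"
  proof -
    have "card (\<Union>k\<in>snd ` A. column k) = (\<Sum>k\<in>snd ` A. card (column k))"
      using assms(1) finite_column by (intro card_UN_disjoint) (auto simp: column_def)
    moreover have "(\<Union>k\<in>snd ` A. column k) = A" by (auto simp: column_def)
    ultimately show ?thesis by simp
  qed
  finally show ?thesis .
qed

lemma card_singleton_images_le:
  assumes "finite V" "P \<subseteq> {p. \<exists>z\<in>V. f z = {p}}"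
  shows "finite P \<and> card P \<le> card V"
proof -
  have sub: "P \<subseteq> (\<lambda>z. the_elem (f z)) ` V"
  proof
    fix p assume "p \<in> P"
    then obtain z where "z \<in> V" "f z = {p}" using assms(2) by blast
    then show "p \<in> (\<lambda>z. the_elem (f z)) ` V" by (intro image_eqI[of _ _ z]) auto
  qed
  then have "card P \<le> card ((\<lambda>z. the_elem (f z)) ` V)" by (rule card_mono[rotated]) (use assms(1) in simp)
  also have "\<dots> \<le> card V" by (rule card_image_le[OF assms(1)])
  finally show ?thesis using assms(1) finite_subset[OF sub] by simp
qed

definition lower_entries :: "nat \<Rightarrow> (nat \<times> nat) set" where
  "lower_entries n = {(i, j). i < n \<and> j \<le> i}"

definition lower_triples :: "nat \<Rightarrow> (nat \<times> nat \<times> nat) set" where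
  "lower_triples n = {(i, j, k). i < n \<and> j \<le> i \<and> k < j}"

lemma lower_triples_finite: "finite (lower_triples n)"
  by (rule finite_subset[of _ "{..<n} \<times> {..<n} \<times> {..<n}"]) (auto simp: lower_triples_def)

lemma card_lower_entries: "2 * card (lower_entries n) = n * Suc n"
proof -
  have "lower_entries n = Sigma {..<n} (\<lambda>i. {..i})" by (auto simp: lower_entries_def)
  then have "card (lower_entries n) = (\<Sum>i<n. Suc i)" by simp
  moreover have "2 * (\<Sum>i<n. Suc i) = n * Suc n" by (induction n) auto
  ultimately show ?thesis by simp
qed

lemma card_lower_triples: "6 * real (card (lower_triples n)) = real n ^ 3 - real n"
proof -
  have "lower_triples n = Sigma {..<n} (\<lambda>i. Sigma {..i} (\<lambda>j. {..<j}))"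
    by (auto simp: lower_triples_def)
  then have "card (lower_triples n) = (\<Sum>i<n. \<Sum>j\<le>i. j)" by simp
  moreover have "6 * real (\<Sum>i<n. \<Sum>j\<le>i. j) = real n ^ 3 - real n"
  proof (induction n)
    case (Suc n)
    have "2 * (\<Sum>j\<le>n. j) = n * Suc n" by (induction n) auto
    then have "2 * real (\<Sum>j\<le>n. j) = real n * (real n + 1)" by (metis of_nat_Suc of_nat_mult of_nat_numeral add.commute)
    with Suc show ?case by (simp add: power3_eq_cube algebra_simps)
  qed simp
  ultimately show ?thesis by simp
qed

section \<open>Segments of the trace\<close>

context trace
begin

definition words_between :: "nat \<Rightarrow> nat \<Rightarrow> nat" where
  "words_between b e = (\<Sum>t\<in>{b..<e}. msg_words (prog ! t))"

lemma words_between_split: "b \<le> m \<Longrightarrow> m \<le> e \<Longrightarrow> words_between b e = words_between b m + words_between m e"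
  by (simp add: words_between_def sum.atLeastLessThan_concat)

lemma words_between_mono: "e \<le> e' \<Longrightarrow> words_between b e \<le> words_between b e'"
  unfolding words_between_def by (rule sum_mono2) auto

lemma words_between_total: "words_between 0 L = bandwidth prog"
  by (simp add: words_between_def bandwidth_def sum_list_sum_nth)

lemma msg_words_le: "t < L \<Longrightarrow> msg_words (prog ! t) \<le> M"
  using wf by (cases "prog ! t") (auto dest!: nth_mem)

lemma card_UN_le_words_between:
  assumes "\<And>t. finite (X t) \<and> card (X t) \<le> msg_words (prog ! t)"
  shows "finite (\<Union>t\<in>{b..<e}. X t) \<and> card (\<Union>t\<in>{b..<e}. X t) \<le> words_between b e"
proof -
  have "card (\<Union>t\<in>{b..<e}. X t) \<le> (\<Sum>t\<in>{b..<e}. card (X t))" by (rule card_UN_le) simp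
  also have "\<dots> \<le> words_between b e" unfolding words_between_def by (rule sum_mono) (use assms in blast)
  finally show ?thesis using assms by auto
qed

lemma card_segment_inputs:
  assumes "b \<le> L"
  shows "finite (segment_inputs b e) \<and> card (segment_inputs b e) \<le> M + words_between b e"
proof -
  have "finite (\<Union>t\<in>{b..<e}. loaded_values t) \<and> card (\<Union>t\<in>{b..<e}. loaded_values t) \<le> words_between b e"
    by (rule card_UN_le_words_between) (rule card_loaded_values)
  moreover have "card (segment_inputs b e) \<le> card (fast_values b) + card (\<Union>t\<in>{b..<e}. loaded_values t)"
    unfolding segment_inputs_def by (rule card_Un_le)
  ultimately show ?thesis using card_fast_values[OF assms] by (auto simp: segment_inputs_def)
qed

lemma card_segment_outputs:
  assumes "e \<le> L"
  shows "finite (segment_outputs b e) \<and> card (segment_outputs b e) \<le> M + words_between b e"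
proof -
  have "finite (\<Union>t\<in>{b..<e}. stored_values t) \<and> card (\<Union>t\<in>{b..<e}. stored_values t) \<le> words_between b e"
    by (rule card_UN_le_words_between) (rule card_stored_values)
  moreover have "card (segment_outputs b e) \<le> card (fast_values e) + card (\<Union>t\<in>{b..<e}. stored_values t)"
    unfolding segment_outputs_def by (rule card_Un_le)
  ultimately show ?thesis using card_fast_values[OF assms] by (auto simp: segment_outputs_def)
qed

lemma card_operand_entries:
  "b \<le> L \<Longrightarrow> finite (operand_entries b e) \<and> card (operand_entries b e) \<le> M + words_between b e"
  using card_segment_inputs[of b e]
    card_singleton_images_le[of "segment_inputs b e" "operand_entries b e" spine_inputs]
  unfolding operand_entries_def by simp

lemma card_result_entries:
  "e \<le> L \<Longrightarrow> finite (result_entries b e) \<and> card (result_entries b e) \<le> M + words_between b e"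
  using card_segment_outputs[of e b]
    card_singleton_images_le[of "segment_outputs b e" "result_entries b e" update_entries]
  unfolding result_entries_def by simp

text \<open>Segment \<open>g\<close> consists of the steps \<open>t\<close> with \<open>g * M \<le> words_between 0 t < (g + 1) * M\<close>;
  since a message has at most \<open>M\<close> words, it transfers at most \<open>2 * M\<close> words.\<close>

definition segment_start :: "nat \<Rightarrow> nat" where
  "segment_start g = (LEAST t. t = L \<or> g * M \<le> words_between 0 t)"

lemma segment_start_le: "segment_start g \<le> L"
  unfolding segment_start_def by (rule Least_le) simp

lemma segment_start_le_iff: "t < L \<Longrightarrow> segment_start g \<le> t \<longleftrightarrow> g * M \<le> words_between 0 t"
proof
  assume t: "t < L" "segment_start g \<le> t"
  have "segment_start g = L \<or> g * M \<le> words_between 0 (segment_start g)"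
    unfolding segment_start_def by (rule LeastI[of _ L]) simp
  then show "g * M \<le> words_between 0 t" using t words_between_mono[OF t(2), of 0] by auto
next
  assume "g * M \<le> words_between 0 t"
  then show "segment_start g \<le> t" unfolding segment_start_def by (rule Least_le[OF disjI2])
qed

lemma words_in_segment: "words_between (segment_start g) (segment_start (Suc g)) \<le> 2 * M"
proof (cases "segment_start g < segment_start (Suc g)")
  case True
  define b e where "b = segment_start g" and "e = segment_start (Suc g)"
  have be: "b < e" "e \<le> L" using True segment_start_le by (auto simp: b_def e_def)
  then obtain e' where e': "e = Suc e'" "e' < L" by (cases e) auto
  have "g * M \<le> words_between 0 b" using segment_start_le_iff[of b g] be by (simp add: b_def)
  moreover have "words_between 0 e' < Suc g * M"
    using segment_start_le_iff[OF e'(2), of "Suc g"] e'(1) by (simp add: e_def)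
  moreover have "words_between 0 e = words_between 0 e' + msg_words (prog ! e')"
    using e' by (simp add: words_between_def)
  moreover have "words_between 0 e = words_between 0 b + words_between b e"
    using be by (intro words_between_split) auto
  ultimately show ?thesis using msg_words_le[OF e'(2)] by (simp add: b_def e_def)
qed (simp add: words_between_def)

lemma step_in_segment:
  assumes "0 < M" "t < L"
  shows "segment_start (words_between 0 t div M) \<le> t \<and> t < segment_start (Suc (words_between 0 t div M))"
proof -
  have "words_between 0 t div M * M \<le> words_between 0 t" by simp
  moreover have "\<not> Suc (words_between 0 t div M) * M \<le> words_between 0 t"
    using assms(1) by (metis div_less_iff_less_mult lessI not_le)
  ultimately show ?thesis using segment_start_le_iff[OF assms(2)] by (metis not_le)
qed

end

locale cholesky_program = trace +
  assumes outputs: "\<forall>i<n. \<forall>j\<le>i. \<exists>q e. snd (run prog (init_state n pos)) q = Some e \<and> chol_entry i j e"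
begin

lemma chol_output:
  assumes "i < n" "j \<le> i"
  obtains q X where "snd (state_at L) q = Some X" "chol_entry i j X"
  using outputs assms state_at_length that by auto

definition triple_step :: "nat \<times> nat \<times> nat \<Rightarrow> nat" where
  "triple_step = (\<lambda>(i, j, k). SOME s. s < L \<and> (\<forall>b e. b \<le> s \<longrightarrow> s < e \<longrightarrow> e \<le> L \<longrightarrow>
     (i, k) \<in> operand_entries b e \<and> (j, k) \<in> operand_entries b e \<and> (i, j) \<in> result_entries b e))"

lemma triple_step:
  assumes "(i, j, k) \<in> lower_triples n"
  shows "triple_step (i, j, k) < L \<and>
    (\<forall>b e. b \<le> triple_step (i, j, k) \<longrightarrow> triple_step (i, j, k) < e \<longrightarrow> e \<le> L \<longrightarrow>
     (i, k) \<in> operand_entries b e \<and> (j, k) \<in> operand_entries b e \<and> (i, j) \<in> result_entries b e)"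
proof -
  have ijk: "i < n" "j \<le> i" "k < j" using assms by (auto simp: lower_triples_def)
  obtain q X where X: "snd (state_at L) q = Some X" "chol_entry i j X" using chol_output ijk(1,2) .
  then have "X \<in> slow_values L" by (auto simp: slow_values_def)
  then obtain s where "s < L" "\<And>b e. b \<le> s \<Longrightarrow> s < e \<Longrightarrow> e \<le> L \<Longrightarrow>
    (i, k) \<in> operand_entries b e \<and> (j, k) \<in> operand_entries b e \<and> (i, j) \<in> result_entries b e"
    using chol_triple_step X(2) ijk(3) by blast
  then have "\<exists>s. s < L \<and> (\<forall>b e. b \<le> s \<longrightarrow> s < e \<longrightarrow> e \<le> L \<longrightarrow>
     (i, k) \<in> operand_entries b e \<and> (j, k) \<in> operand_entries b e \<and> (i, j) \<in> result_entries b e)"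
    by blast
  then show ?thesis unfolding triple_step_def split_conv by (rule someI_ex)
qed

definition segment_triples :: "nat \<Rightarrow> (nat \<times> nat \<times> nat) set" where
  "segment_triples g =
     {t \<in> lower_triples n. segment_start g \<le> triple_step t \<and> triple_step t < segment_start (Suc g)}"

lemma card_segment_triples: "real (card (segment_triples g)) \<le> 6 * sqrt (real M) ^ 3"
proof -
  define b e where "b = segment_start g" and "e = segment_start (Suc g)"
  have "b \<le> L" "e \<le> L" using segment_start_le by (auto simp: b_def e_def)
  moreover have "words_between b e \<le> 2 * M" using words_in_segment by (simp add: b_def e_def)
  ultimately have A: "finite (operand_entries b e)" "card (operand_entries b e) \<le> 3 * M"
    and C: "finite (result_entries b e)" "card (result_entries b e) \<le> 3 * M"
    using card_operand_entries[of b e] card_result_entries[of e b] by auto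
  have "segment_triples g \<subseteq>
    {(i, j, k). (i, k) \<in> operand_entries b e \<and> (j, k) \<in> operand_entries b e \<and> (i, j) \<in> result_entries b e}"
  proof
    fix t assume t: "t \<in> segment_triples g"
    obtain i j k where ijk: "t = (i, j, k)" by (cases t)
    with t have "(i, j, k) \<in> lower_triples n" "b \<le> triple_step (i, j, k)" "triple_step (i, j, k) < e"
      by (auto simp: segment_triples_def b_def e_def)
    then show "t \<in> {(i, j, k). (i, k) \<in> operand_entries b e \<and> (j, k) \<in> operand_entries b e \<and> (i, j) \<in> result_entries b e}"
      using triple_step \<open>e \<le> L\<close> ijk by blast
  qed
  then have "real (card (segment_triples g)) \<le> real (card (operand_entries b e)) * sqrt (real (card (result_entries b e)))"
    by (rule card_triangles_le[OF A(1) C(1)])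
  also have "\<dots> \<le> real (3 * M) * sqrt (real (3 * M))"
    using A(2) C(2) by (intro mult_mono) auto
  also have "\<dots> = 3 * sqrt 3 * sqrt (real M) ^ 3"
    by (simp add: real_sqrt_mult power3_eq_cube)
  also have "\<dots> \<le> 6 * sqrt (real M) ^ 3"
    using real_sqrt_le_iff[of 3 4] by (intro mult_right_mono) auto
  finally show ?thesis .
qed

lemma card_lower_triples_le:
  assumes "0 < M"
  shows "real (card (lower_triples n)) \<le> 6 * (real (bandwidth prog) * sqrt (real M) + sqrt (real M) ^ 3)"
proof -
  define G where "G = bandwidth prog div M"
  have "lower_triples n \<subseteq> (\<Union>g\<le>G. segment_triples g)"
  proof
    fix t assume t: "t \<in> lower_triples n"
    then have "triple_step t < L" using triple_step by (cases t) blast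
    moreover from this have "words_between 0 (triple_step t) div M \<le> G"
      using words_between_mono[of "triple_step t" L 0] words_between_total by (simp add: G_def div_le_mono)
    ultimately show "t \<in> (\<Union>g\<le>G. segment_triples g)"
      using step_in_segment[OF assms] t by (force simp: segment_triples_def)
  qed
  moreover have "finite (segment_triples g)" for g
    using lower_triples_finite by (rule finite_subset[rotated]) (auto simp: segment_triples_def)
  ultimately have "card (lower_triples n) \<le> card (\<Union>g\<le>G. segment_triples g)"
    by (intro card_mono) auto
  also have "\<dots> \<le> (\<Sum>g\<le>G. card (segment_triples g))" by (rule card_UN_le) simp
  finally have "card (lower_triples n) \<le> (\<Sum>g\<le>G. card (segment_triples g))" .
  then have "real (card (lower_triples n)) \<le> (\<Sum>g\<le>G. real (card (segment_triples g)))"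
    by (metis of_nat_le_iff of_nat_sum)
  also have "\<dots> \<le> real (Suc G) * (6 * sqrt (real M) ^ 3)"
    using sum_mono[of "{..G}" "\<lambda>g. real (card (segment_triples g))", OF card_segment_triples] by simp
  also have "\<dots> \<le> (real (bandwidth prog) / real M + 1) * (6 * sqrt (real M) ^ 3)"
    using of_nat_div_le_of_nat[of "bandwidth prog" M] by (intro mult_right_mono) (auto simp: G_def)
  also have "\<dots> = 6 * (real (bandwidth prog) * sqrt (real M) + sqrt (real M) ^ 3)"
    using assms by (simp add: power3_eq_cube field_simps)
  finally show ?thesis .
qed

lemma card_lower_entries_le: "card (lower_entries n) \<le> bandwidth prog"
proof -
  define addr where
    "addr p = (SOME q. \<exists>X. snd (state_at L) q = Some X \<and> chol_entry (fst p) (snd p) X)" for p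
  have addr: "\<exists>X. snd (state_at L) (addr p) = Some X \<and> chol_entry (fst p) (snd p) X"
    if p: "p \<in> lower_entries n" for p
  proof -
    obtain i j where ij: "p = (i, j)" "i < n" "j \<le> i" using p by (auto simp: lower_entries_def)
    obtain q X where "snd (state_at L) q = Some X" "chol_entry i j X" using chol_output ij(2,3) .
    then have "\<exists>q X. snd (state_at L) q = Some X \<and> chol_entry (fst p) (snd p) X" using ij(1) by auto
    then show ?thesis unfolding addr_def by (rule someI_ex)
  qed
  have "inj_on addr (lower_entries n)"
  proof (rule inj_onI)
    fix p p' assume p: "p \<in> lower_entries n" "p' \<in> lower_entries n" "addr p = addr p'"
    obtain X where X: "snd (state_at L) (addr p) = Some X" "chol_entry (fst p) (snd p) X"
      using addr[OF p(1)] by blast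
    obtain X' where X': "snd (state_at L) (addr p') = Some X'" "chol_entry (fst p') (snd p') X'"
      using addr[OF p(2)] by blast
    have "X = X'" using X(1) X'(1) p(3) by simp
    then have "{p} = {p'}"
      using chol_entry_spine_inputs[OF X(2)] chol_entry_spine_inputs[OF X'(2)] by simp
    then show "p = p'" by simp
  qed
  moreover have "addr ` lower_entries n \<subseteq> (\<Union>t<L. stored_addresses t)"
  proof
    fix q assume "q \<in> addr ` lower_entries n"
    then obtain p where "p \<in> lower_entries n" "q = addr p" by blast
    then obtain X where X: "snd (state_at L) q = Some X" "chol_entry (fst p) (snd p) X"
      using addr by blast
    have "snd (state_at 0) q \<noteq> Some X"
      using slow_values_0 chol_entry_not_Inp[OF X(2)] by (auto simp: slow_values_def)
    then show "q \<in> (\<Union>t<L. stored_addresses t)"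
      using slow_memory_changed[of L q] X(1) by simp
  qed
  moreover have stored: "finite (\<Union>t\<in>{0..<L}. stored_addresses t) \<and>
      card (\<Union>t\<in>{0..<L}. stored_addresses t) \<le> words_between 0 L"
    by (rule card_UN_le_words_between) (rule card_stored_addresses)
  ultimately have "card (lower_entries n) \<le> card (\<Union>t<L. stored_addresses t)"
    by (intro card_inj_on_le[of addr]) (auto simp: atLeast0LessThan)
  also have "\<dots> \<le> bandwidth prog"
    using stored words_between_total by (simp add: atLeast0LessThan)
  finally show ?thesis .
qed

end

section \<open>Communication lower bounds\<close>

lemma cube_le_bandwidth_bound:
  fixes n B s :: real
  assumes "0 < s" "2 \<le> n" "n ^ 3 - n \<le> 36 * (B * s + s ^ 3)" "n ^ 2 \<le> 2 * B"
  shows "n ^ 3 \<le> 144 * (B * s)"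
proof -
  have "4 * n \<le> n ^ 3"
    using mult_right_mono[of 4 "n ^ 2" n] power_mono[OF assms(2), of 2] assms(2)
    by (simp add: power3_eq_cube power2_eq_square mult.commute)
  moreover have "n ^ 3 - n \<le> 36 * (B * s) + 36 * s ^ 3" using assms(3) by (simp add: distrib_left)
  ultimately have cube: "n ^ 3 \<le> 48 * (B * s) + 48 * s ^ 3" by linarith
  have "0 \<le> B" using assms(4) zero_le_power2[of n] by linarith
  then have "0 \<le> B * s" using assms(1) by simp
  show ?thesis
  proof (cases "6 * s \<le> n")
    case True
    then have "216 * s ^ 3 \<le> n ^ 3" using power_mono[OF True, of 3] assms(1) by simp
    then show ?thesis using cube \<open>0 \<le> B * s\<close> by linarith
  next
    case False
    have "n ^ 3 = n ^ 2 * n" by (simp add: power3_eq_cube power2_eq_square)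
    also have "\<dots> \<le> (2 * B) * (6 * s)" using False assms(2,4) \<open>0 \<le> B\<close> by (intro mult_mono) auto
    finally show ?thesis using \<open>0 \<le> B * s\<close> by simp
  qed
qed

lemma classical_cholesky_bandwidth:
  assumes "0 < M" "M < n\<^sup>2" "classical_cholesky n M pos prog"
  shows "real n ^ 3 \<le> 144 * (real (bandwidth prog) * sqrt (real M))"
proof -
  interpret cholesky_program n M pos prog
    using assms(3) by unfold_locales (auto simp: classical_cholesky_def)
  have "\<not> n \<le> 1"
  proof
    assume "n \<le> 1"
    then have "n\<^sup>2 \<le> 1\<^sup>2" by (rule power_mono) simp
    then show False using assms(1,2) by simp
  qed
  moreover have "real n ^ 3 - real n \<le> 36 * (real (bandwidth prog) * sqrt (real M) + sqrt (real M) ^ 3)"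
    using card_lower_triples[of n] card_lower_triples_le[OF assms(1)] by simp
  moreover have "real n ^ 2 \<le> 2 * real (bandwidth prog)"
  proof -
    have "n * n \<le> 2 * card (lower_entries n)" using card_lower_entries[of n] by simp
    then show ?thesis using card_lower_entries_le by (simp add: power2_eq_square flip: of_nat_mult)
  qed
  ultimately show ?thesis using cube_le_bandwidth_bound assms(1) by simp
qed

lemma classical_cholesky_communication:
  assumes "0 < M" "M < n\<^sup>2" "classical_cholesky n M pos prog"
  shows "real (bandwidth prog) \<ge> 1/144 * real n ^ 3 / sqrt (real M) \<and>
    real (latency prog) \<ge> 1/144 * real n ^ 3 / (real M powr (3/2))"
proof -
  define s where "s = sqrt (real M)"
  have "0 < s" using assms(1) by (simp add: s_def)
  then have bandwidth: "1/144 * real n ^ 3 / s \<le> real (bandwidth prog)"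
    using classical_cholesky_bandwidth[OF assms] by (simp add: s_def divide_le_eq algebra_simps)
  have "real M powr (3/2) = real M powr (1 + 1/2)" by simp
  also have "\<dots> = real M powr 1 * real M powr (1/2)" by (rule powr_add)
  also have "\<dots> = real M * s" using assms(1) by (simp add: s_def powr_half_sqrt)
  finally have "1/144 * real n ^ 3 / (real M powr (3/2)) = (1/144 * real n ^ 3 / s) / real M"
    by (simp add: divide_divide_eq_left mult.commute)
  also have "\<dots> \<le> real (bandwidth prog) / real M"
    using divide_right_mono[OF bandwidth, of "real M"] by simp
  also have "\<dots> \<le> real (latency prog)"
    using bandwidth_le_latency[of prog M] assms(1,3)
    by (simp add: classical_cholesky_def divide_le_eq mult.commute flip: of_nat_mult)
  finally show ?thesis using bandwidth by (simp add: s_def)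
qed

theorem corollary2p5:
  shows "\<exists>c>0. \<forall>n M pos prog.
           0 < M \<and> M < n\<^sup>2 \<and> valid_layout n pos \<and> classical_cholesky n M pos prog \<longrightarrow>
             real (bandwidth prog) \<ge> c * real n ^ 3 / sqrt (real M) \<and>
             real (latency prog) \<ge> c * real n ^ 3 / (real M powr (3/2))"
  using classical_cholesky_communication by (intro exI[of _ "1/144"]) auto

end
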